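(* Let $f\in\mathcal H$, $f\ne0$, and let $d=\operatorname{ord}_0(f)$. Put $J=f-\Pi_{[Sf]}(f)=\Pi_{[Sf]^\perp}(f)$ and $v=\Pi_{[f]}\big(k_0^{(d)}\big)$. Then $$v=\frac{v^{(d)}(0)}{f^{(d)}(0)}\,J.$$
   Context: Standing assumptions: $\Omega\subset\mathbb C$ is a domain with $0\in\Omega$, and $\mathcal H$ is a Hilbert space of analytic functions on $\Omega$ in which every point evaluation $f\mapsto f(w)$, $w\in\Omega$, is bounded; the shift $S$, $(Sf)(z)=zf(z)$, is bounded on $\mathcal H$; and the polynomials $\mathcal P$ are dense in $\mathcal H$. For $w\in\Omega$, $m\ge0$, $k_w^{(m)}\in\mathcal H$ satisfies $\langle f,k_w^{(m)}\rangle=f^{(m)}(w)$ for all $f\in\mathcal H$. For $g\in\mathcal H$, $[g]$ is the closure in $\mathcal H$ of $\operatorname{span}\{z^kg:k\ge0\}$. $\Pi_V$ denotes orthogonal projection onto a closed subspace $V$; $\operatorname{ord}_0(f)$ is the order of the zero of $f$ at $0$. *)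

theory Defs
  imports "HOL-Complex_Analysis.Complex_Analysis" "HOL-Computational_Algebra.Polynomial"
begin

type_synonym cfun = "complex \<Rightarrow> complex"

text \<open>Elements of the space are functions on the complex plane that are holomorphic on
  the domain and (as a normalisation) vanish outside of it; the inner product is an
  arbitrary function ip, required by the predicate below to be a complete inner product.\<close>

definition hnorm :: "(cfun \<Rightarrow> cfun \<Rightarrow> complex) \<Rightarrow> cfun \<Rightarrow> real" where
  "hnorm ip f = sqrt (Re (ip f f))"

definition hclosure :: "cfun set \<Rightarrow> (cfun \<Rightarrow> cfun \<Rightarrow> complex) \<Rightarrow> cfun set \<Rightarrow> cfun set" where
  "hclosure H ip A = {f \<in> H. \<forall>e>0. \<exists>a\<in>A. hnorm ip (\<lambda>z. f z - a z) < e}"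

definition polyOn :: "complex set \<Rightarrow> complex poly \<Rightarrow> cfun" where
  "polyOn \<Omega> p = (\<lambda>z. if z \<in> \<Omega> then poly p z else 0)"

definition shift :: "cfun \<Rightarrow> cfun" where
  "shift f = (\<lambda>z. z * f z)"

definition cyc :: "cfun set \<Rightarrow> (cfun \<Rightarrow> cfun \<Rightarrow> complex) \<Rightarrow> cfun \<Rightarrow> cfun set" where
  "cyc H ip g = hclosure H ip {(\<lambda>z. poly p z * g z) | p. True}"

definition hproj :: "(cfun \<Rightarrow> cfun \<Rightarrow> complex) \<Rightarrow> cfun set \<Rightarrow> cfun \<Rightarrow> cfun" where
  "hproj ip V f = (THE g. g \<in> V \<and> (\<forall>h\<in>V. ip (\<lambda>z. f z - g z) h = 0))"

definition analytic_hilbert_space ::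
  "complex set \<Rightarrow> cfun set \<Rightarrow> (cfun \<Rightarrow> cfun \<Rightarrow> complex) \<Rightarrow> bool" where
  "analytic_hilbert_space \<Omega> H ip \<longleftrightarrow>
     open \<Omega> \<and> connected \<Omega> \<and> 0 \<in> \<Omega> \<and>
     (\<forall>f\<in>H. f holomorphic_on \<Omega> \<and> (\<forall>z. z \<notin> \<Omega> \<longrightarrow> f z = 0)) \<and>
     (\<lambda>z. 0) \<in> H \<and>
     (\<forall>f\<in>H. \<forall>g\<in>H. (\<lambda>z. f z + g z) \<in> H) \<and>
     (\<forall>f\<in>H. \<forall>c. (\<lambda>z. c * f z) \<in> H) \<and>
     (\<forall>f\<in>H. \<forall>g\<in>H. \<forall>h\<in>H. ip (\<lambda>z. f z + g z) h = ip f h + ip g h) \<and>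
     (\<forall>f\<in>H. \<forall>g\<in>H. \<forall>c. ip (\<lambda>z. c * f z) g = c * ip f g) \<and>
     (\<forall>f\<in>H. \<forall>g\<in>H. ip g f = cnj (ip f g)) \<and>
     (\<forall>f\<in>H. Im (ip f f) = 0 \<and> Re (ip f f) \<ge> 0) \<and>
     (\<forall>f\<in>H. ip f f = 0 \<longrightarrow> f = (\<lambda>z. 0)) \<and>
     (\<forall>F. (\<forall>n. F n \<in> H) \<and>
          (\<forall>e>0. \<exists>N. \<forall>m\<ge>N. \<forall>n\<ge>N. hnorm ip (\<lambda>z. F m z - F n z) < e) \<longrightarrow>
          (\<exists>g\<in>H. (\<lambda>n. hnorm ip (\<lambda>z. F n z - g z)) \<longlonglongrightarrow> 0)) \<and>
     (\<forall>w\<in>\<Omega>. \<exists>C. \<forall>f\<in>H. norm (f w) \<le> C * hnorm ip f) \<and>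
     (\<forall>f\<in>H. shift f \<in> H) \<and>
     (\<exists>C. \<forall>f\<in>H. hnorm ip (shift f) \<le> C * hnorm ip f) \<and>
     (\<forall>p. polyOn \<Omega> p \<in> H) \<and>
     hclosure H ip {polyOn \<Omega> p | p. True} = H"

end

theory Submission
  imports Defs
begin

(* Let P be the projection of f onto [Sf] and J = f - P. Every polynomial multiple p f is
   p(0) J plus an element of [Sf], so [f] is the closed span of J and [Sf]. The functional
   g \<mapsto> g^(d)(0), represented by k_0^(d), vanishes on [Sf] since the derivatives of f of
   order below d vanish at 0. Hence k_0^(d) is orthogonal to [Sf], and its projection onto [f]
   is its projection c J onto the line through J. Since J^(d)(0) = <J, k_0^(d)> = f^(d)(0) is
   nonzero, c is read off from the d-th derivatives at 0. *)

locale analytic_hilbert =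
  fixes Om :: "complex set" and H :: "cfun set" and ip :: "cfun \<Rightarrow> cfun \<Rightarrow> complex"
  assumes analytic_hilbert_space: "analytic_hilbert_space Om H ip"
begin

lemma space_axioms:
  "open Om" "connected Om" "0 \<in> Om"
  "\<forall>f\<in>H. f holomorphic_on Om \<and> (\<forall>z. z \<notin> Om \<longrightarrow> f z = 0)"
  "(\<lambda>z. 0) \<in> H"
  "\<forall>f\<in>H. \<forall>g\<in>H. (\<lambda>z. f z + g z) \<in> H"
  "\<forall>f\<in>H. \<forall>c. (\<lambda>z. c * f z) \<in> H"
  "\<forall>f\<in>H. \<forall>g\<in>H. \<forall>h\<in>H. ip (\<lambda>z. f z + g z) h = ip f h + ip g h"
  "\<forall>f\<in>H. \<forall>g\<in>H. \<forall>c. ip (\<lambda>z. c * f z) g = c * ip f g"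
  "\<forall>f\<in>H. \<forall>g\<in>H. ip g f = cnj (ip f g)"
  "\<forall>f\<in>H. Im (ip f f) = 0 \<and> Re (ip f f) \<ge> 0"
  "\<forall>f\<in>H. ip f f = 0 \<longrightarrow> f = (\<lambda>z. 0)"
  "\<forall>F. (\<forall>n. F n \<in> H) \<and>
        (\<forall>e>0. \<exists>N. \<forall>m\<ge>N. \<forall>n\<ge>N. hnorm ip (\<lambda>z. F m z - F n z) < e) \<longrightarrow>
        (\<exists>g\<in>H. (\<lambda>n. hnorm ip (\<lambda>z. F n z - g z)) \<longlonglongrightarrow> 0)"
  "\<forall>f\<in>H. shift f \<in> H"
  by (insert analytic_hilbert_space[unfolded analytic_hilbert_space_def]) (elim conjE, assumption)+

lemma domain: "open Om" "connected Om" "0 \<in> Om"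
  using space_axioms(1-3) .

lemma holomorphic: "f \<in> H \<Longrightarrow> f holomorphic_on Om"
  using space_axioms(4) by blast

lemma vanishes_outside: "f \<in> H \<Longrightarrow> z \<notin> Om \<Longrightarrow> f z = 0"
  using space_axioms(4) by blast

lemma zero_mem: "(\<lambda>z. 0) \<in> H"
  using space_axioms(5) .

lemma add_mem: "f \<in> H \<Longrightarrow> g \<in> H \<Longrightarrow> (\<lambda>z. f z + g z) \<in> H"
  using space_axioms(6) by blast

lemma scale_mem: "f \<in> H \<Longrightarrow> (\<lambda>z. c * f z) \<in> H"
  using space_axioms(7) by blast

lemma ip_add_left: "f \<in> H \<Longrightarrow> g \<in> H \<Longrightarrow> h \<in> H \<Longrightarrow> ip (\<lambda>z. f z + g z) h = ip f h + ip g h"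
  using space_axioms(8) by blast

lemma ip_scale_left: "f \<in> H \<Longrightarrow> g \<in> H \<Longrightarrow> ip (\<lambda>z. c * f z) g = c * ip f g"
  using space_axioms(9) by blast

lemma ip_commute: "f \<in> H \<Longrightarrow> g \<in> H \<Longrightarrow> ip g f = cnj (ip f g)"
  using space_axioms(10) by blast

lemma ip_self_real_nonneg: "f \<in> H \<Longrightarrow> Im (ip f f) = 0 \<and> Re (ip f f) \<ge> 0"
  using space_axioms(11) by blast

lemma ip_self_eq_zero: "f \<in> H \<Longrightarrow> ip f f = 0 \<Longrightarrow> f = (\<lambda>z. 0)"
  using space_axioms(12) by blast

lemma complete:
  "(\<And>n. F n \<in> H) \<Longrightarrow> \<forall>e>0. \<exists>N. \<forall>m\<ge>N. \<forall>n\<ge>N. hnorm ip (\<lambda>z. F m z - F n z) < e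
    \<Longrightarrow> \<exists>g\<in>H. (\<lambda>n. hnorm ip (\<lambda>z. F n z - g z)) \<longlonglongrightarrow> 0"
  using space_axioms(13) by blast

lemma shift_mem: "f \<in> H \<Longrightarrow> shift f \<in> H"
  using space_axioms(14) by blast

section \<open>Inner product and norm\<close>

lemma diff_mem: "f \<in> H \<Longrightarrow> g \<in> H \<Longrightarrow> (\<lambda>z. f z - g z) \<in> H"
  using add_mem[of f "\<lambda>z. (-1) * g z"] scale_mem[of g "-1"] by simp

lemma ip_zero_left: "g \<in> H \<Longrightarrow> ip (\<lambda>z. 0) g = 0"
  using ip_scale_left[of "\<lambda>z. 0" g 0] zero_mem by simp

lemma ip_zero_right: "g \<in> H \<Longrightarrow> ip g (\<lambda>z. 0) = 0"
  using ip_commute[of g "\<lambda>z. 0"] ip_zero_left zero_mem by simp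

lemma ip_diff_left:
  assumes "f \<in> H" "g \<in> H" "h \<in> H"
  shows "ip (\<lambda>z. f z - g z) h = ip f h - ip g h"
  using ip_add_left[OF assms(1) scale_mem[OF assms(2)] assms(3), of "-1"]
    ip_scale_left[OF assms(2,3), of "-1"] by simp

lemma ip_diff_right:
  assumes "f \<in> H" "g \<in> H" "h \<in> H"
  shows "ip h (\<lambda>z. f z - g z) = ip h f - ip h g"
  using ip_commute[OF diff_mem[OF assms(1,2)] assms(3)] ip_diff_left[OF assms]
    ip_commute[OF assms(1,3)] ip_commute[OF assms(2,3)] by simp

lemma ip_scale_right:
  assumes "f \<in> H" "g \<in> H"
  shows "ip g (\<lambda>z. c * f z) = cnj c * ip g f"
  using ip_commute[OF scale_mem[OF assms(1)] assms(2)] ip_scale_left[OF assms]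
    ip_commute[OF assms] by simp

definition sq_norm :: "cfun \<Rightarrow> real" where
  "sq_norm f = Re (ip f f)"

lemma sq_norm_nonneg: "f \<in> H \<Longrightarrow> sq_norm f \<ge> 0"
  unfolding sq_norm_def using ip_self_real_nonneg by blast

lemma ip_self_eq_sq_norm: "f \<in> H \<Longrightarrow> ip f f = complex_of_real (sq_norm f)"
  using ip_self_real_nonneg unfolding sq_norm_def by (simp add: complex_eq_iff)

lemma sq_norm_eq_zero_iff: "f \<in> H \<Longrightarrow> sq_norm f = 0 \<longleftrightarrow> f = (\<lambda>z. 0)"
  using ip_self_eq_sq_norm[of f] ip_self_eq_zero[of f] ip_zero_left[OF zero_mem]
  unfolding sq_norm_def by auto

lemma hnorm_eq_sqrt: "hnorm ip f = sqrt (sq_norm f)"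
  unfolding hnorm_def sq_norm_def ..

lemma hnorm_nonneg: "f \<in> H \<Longrightarrow> hnorm ip f \<ge> 0"
  by (simp add: hnorm_eq_sqrt sq_norm_nonneg)

lemma hnorm_squared: "f \<in> H \<Longrightarrow> (hnorm ip f)\<^sup>2 = sq_norm f"
  by (simp add: hnorm_eq_sqrt sq_norm_nonneg)

lemma sq_norm_diff_scale:
  assumes f: "f \<in> H" and g: "g \<in> H"
  shows "sq_norm (\<lambda>z. f z - c * g z) = sq_norm f - 2 * Re (cnj c * ip f g) + (cmod c)\<^sup>2 * sq_norm g"
proof -
  have cg: "(\<lambda>z. c * g z) \<in> H" and fcg: "(\<lambda>z. f z - c * g z) \<in> H"
    using scale_mem[OF g] diff_mem[OF f scale_mem[OF g]] by auto
  have "ip (\<lambda>z. f z - c * g z) (\<lambda>z. f z - c * g z)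
      = ip f f - cnj c * ip f g - c * cnj (ip f g) + c * cnj c * ip g g"
    using ip_diff_left[OF f cg fcg] ip_diff_right[OF f cg f] ip_diff_right[OF f cg g]
      ip_scale_left[OF g fcg] ip_scale_right[OF g f] ip_scale_right[OF g g] ip_commute[OF f g]
    by (simp add: algebra_simps)
  moreover have "c * cnj c * ip g g = complex_of_real ((cmod c)\<^sup>2 * sq_norm g)"
    using ip_self_eq_sq_norm[OF g] by (simp add: complex_mult_cnj cmod_power2)
  ultimately show ?thesis
    unfolding sq_norm_def[of "\<lambda>z. f z - c * g z"] by (simp add: sq_norm_def)
qed

lemma sq_norm_scale: "f \<in> H \<Longrightarrow> sq_norm (\<lambda>z. c * f z) = (cmod c)\<^sup>2 * sq_norm f"
  using sq_norm_diff_scale[OF zero_mem, of f "-c"] ip_zero_left[OF zero_mem] ip_zero_left[of f]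
  by (simp add: sq_norm_def[of "\<lambda>z. 0"])

lemma hnorm_scale: "f \<in> H \<Longrightarrow> hnorm ip (\<lambda>z. c * f z) = cmod c * hnorm ip f"
  by (simp add: hnorm_eq_sqrt sq_norm_scale real_sqrt_mult)

lemma hnorm_diff_commute:
  assumes "f \<in> H" "g \<in> H"
  shows "hnorm ip (\<lambda>z. f z - g z) = hnorm ip (\<lambda>z. g z - f z)"
  using hnorm_scale[OF diff_mem[OF assms], of "-1"] by simp

lemma hnorm_diff_self: "hnorm ip (\<lambda>z. f z - f z) = 0"
  using sq_norm_eq_zero_iff[OF zero_mem] by (simp add: hnorm_eq_sqrt)

lemma sq_norm_diff_projection:
  assumes w: "w \<in> H" and h: "h \<in> H" and "sq_norm h \<noteq> 0"
  shows "sq_norm (\<lambda>z. w z - (ip w h / sq_norm h) * h z) = sq_norm w - (cmod (ip w h))\<^sup>2 / sq_norm h"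
proof -
  define a where "a = ip w h"
  have "cnj (a / sq_norm h) * a = complex_of_real ((cmod a)\<^sup>2 / sq_norm h)"
    by (simp add: complex_norm_square[symmetric] field_simps)
  then have re: "Re (cnj (a / sq_norm h) * a) = (cmod a)\<^sup>2 / sq_norm h"
    by (metis Re_complex_of_real)
  have "cmod (a / sq_norm h) = cmod a / sq_norm h"
    using sq_norm_nonneg[OF h] by (simp add: norm_divide)
  then have sq: "(cmod (a / sq_norm h))\<^sup>2 * sq_norm h = (cmod a)\<^sup>2 / sq_norm h"
    using assms(3) by (simp add: power2_eq_square)
  show ?thesis
    using sq_norm_diff_scale[OF w h, of "a / sq_norm h"] re sq unfolding a_def by linarith
qed

lemma cauchy_schwarz:
  assumes f: "f \<in> H" and g: "g \<in> H"
  shows "cmod (ip f g) \<le> hnorm ip f * hnorm ip g"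
proof (cases "sq_norm g = 0")
  case True
  then show ?thesis
    using sq_norm_eq_zero_iff[OF g] ip_zero_right[OF f] hnorm_nonneg f g by simp
next
  case False
  then have pos: "sq_norm g > 0"
    using sq_norm_nonneg[OF g] by simp
  have "0 \<le> sq_norm (\<lambda>z. f z - (ip f g / sq_norm g) * g z)"
    using sq_norm_nonneg diff_mem scale_mem f g by blast
  then have "(cmod (ip f g))\<^sup>2 / sq_norm g \<le> sq_norm f"
    unfolding sq_norm_diff_projection[OF f g False] by linarith
  then have "(cmod (ip f g))\<^sup>2 \<le> sq_norm f * sq_norm g"
    using pos by (simp add: pos_divide_le_eq)
  then have "sqrt ((cmod (ip f g))\<^sup>2) \<le> sqrt (sq_norm f * sq_norm g)"
    by (rule real_sqrt_le_mono)
  then show ?thesis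
    by (simp add: hnorm_eq_sqrt real_sqrt_mult)
qed

lemma hnorm_add_le:
  assumes f: "f \<in> H" and g: "g \<in> H"
  shows "hnorm ip (\<lambda>z. f z + g z) \<le> hnorm ip f + hnorm ip g"
proof -
  have "sq_norm (\<lambda>z. f z + g z) = sq_norm f + 2 * Re (ip f g) + sq_norm g"
    using sq_norm_diff_scale[OF f g, of "-1"] by simp
  also have "\<dots> \<le> (hnorm ip f + hnorm ip g)\<^sup>2"
    using cauchy_schwarz[OF f g] complex_Re_le_cmod[of "ip f g"] hnorm_squared f g
    by (simp add: power2_sum)
  finally have "sqrt (sq_norm (\<lambda>z. f z + g z)) \<le> sqrt ((hnorm ip f + hnorm ip g)\<^sup>2)"
    by (rule real_sqrt_le_mono)
  then show ?thesis
    using hnorm_nonneg f g by (simp add: hnorm_eq_sqrt)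
qed

lemma hnorm_diff_triangle:
  assumes "f \<in> H" "g \<in> H" "h \<in> H"
  shows "hnorm ip (\<lambda>z. f z - h z) \<le> hnorm ip (\<lambda>z. f z - g z) + hnorm ip (\<lambda>z. g z - h z)"
  using hnorm_add_le[OF diff_mem[OF assms(1,2)] diff_mem[OF assms(2,3)]] by simp

section \<open>Closed subspaces\<close>

definition hsubspace :: "cfun set \<Rightarrow> bool" where
  "hsubspace V \<longleftrightarrow> V \<subseteq> H \<and> (\<lambda>z. 0) \<in> V \<and> (\<forall>u\<in>V. \<forall>v\<in>V. (\<lambda>z. u z + v z) \<in> V)
     \<and> (\<forall>u\<in>V. \<forall>c. (\<lambda>z. c * u z) \<in> V)"

lemma hsubspace_subset: "hsubspace V \<Longrightarrow> V \<subseteq> H"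
  unfolding hsubspace_def by blast

lemma hsubspace_zero: "hsubspace V \<Longrightarrow> (\<lambda>z. 0) \<in> V"
  unfolding hsubspace_def by blast

lemma hsubspace_add: "hsubspace V \<Longrightarrow> u \<in> V \<Longrightarrow> v \<in> V \<Longrightarrow> (\<lambda>z. u z + v z) \<in> V"
  unfolding hsubspace_def by blast

lemma hsubspace_scale: "hsubspace V \<Longrightarrow> u \<in> V \<Longrightarrow> (\<lambda>z. c * u z) \<in> V"
  unfolding hsubspace_def by blast

lemma hsubspace_diff: "hsubspace V \<Longrightarrow> u \<in> V \<Longrightarrow> v \<in> V \<Longrightarrow> (\<lambda>z. u z - v z) \<in> V"
  using hsubspace_add[of V u "\<lambda>z. (-1) * v z"] hsubspace_scale[of V v "-1"] by simp

lemma hclosure_subset: "hclosure H ip A \<subseteq> H"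
  unfolding hclosure_def by blast

lemma hclosure_approx: "x \<in> hclosure H ip A \<Longrightarrow> e > 0 \<Longrightarrow> \<exists>a\<in>A. hnorm ip (\<lambda>z. x z - a z) < e"
  unfolding hclosure_def by blast

lemma hclosure_superset: "A \<subseteq> H \<Longrightarrow> A \<subseteq> hclosure H ip A"
  unfolding hclosure_def using hnorm_diff_self by force

lemma hclosure_mono: "A \<subseteq> B \<Longrightarrow> hclosure H ip A \<subseteq> hclosure H ip B"
  unfolding hclosure_def by blast

lemma hclosure_hclosure:
  assumes A: "A \<subseteq> H"
  shows "hclosure H ip (hclosure H ip A) = hclosure H ip A"
proof
  show "hclosure H ip (hclosure H ip A) \<subseteq> hclosure H ip A"
  proof
    fix y assume y: "y \<in> hclosure H ip (hclosure H ip A)"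
    have "\<exists>b\<in>A. hnorm ip (\<lambda>z. y z - b z) < e" if "e > 0" for e
    proof -
      obtain a where a: "a \<in> hclosure H ip A" "hnorm ip (\<lambda>z. y z - a z) < e/2"
        using hclosure_approx[OF y] \<open>e > 0\<close> by (meson half_gt_zero)
      obtain b where b: "b \<in> A" "hnorm ip (\<lambda>z. a z - b z) < e/2"
        using hclosure_approx[OF a(1)] \<open>e > 0\<close> by (meson half_gt_zero)
      have "hnorm ip (\<lambda>z. y z - b z) < e"
        using hnorm_diff_triangle[of y a b] a b A y hclosure_subset by fastforce
      then show ?thesis using b by blast
    qed
    then show "y \<in> hclosure H ip A"
      using y hclosure_subset unfolding hclosure_def by blast
  qed
  show "hclosure H ip A \<subseteq> hclosure H ip (hclosure H ip A)"
    by (rule hclosure_superset[OF hclosure_subset])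
qed

lemma hsubspace_hclosure:
  assumes A: "hsubspace A"
  shows "hsubspace (hclosure H ip A)"
proof -
  have AH: "A \<subseteq> H" using hsubspace_subset[OF A] .
  have "(\<lambda>z. u z + v z) \<in> hclosure H ip A"
    if u: "u \<in> hclosure H ip A" and v: "v \<in> hclosure H ip A" for u v
  proof -
    have uv: "u \<in> H" "v \<in> H" using u v hclosure_subset by auto
    have "\<exists>c\<in>A. hnorm ip (\<lambda>z. (u z + v z) - c z) < e" if "e > 0" for e
    proof -
      obtain a where a: "a \<in> A" "hnorm ip (\<lambda>z. u z - a z) < e/2"
        using hclosure_approx[OF u] \<open>e > 0\<close> by (meson half_gt_zero)
      obtain b where b: "b \<in> A" "hnorm ip (\<lambda>z. v z - b z) < e/2"
        using hclosure_approx[OF v] \<open>e > 0\<close> by (meson half_gt_zero)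
      have "(\<lambda>z. (u z + v z) - (a z + b z)) = (\<lambda>z. (u z - a z) + (v z - b z))"
        by (simp add: algebra_simps)
      moreover have ab: "a \<in> H" "b \<in> H" using a(1) b(1) AH by auto
      ultimately have "hnorm ip (\<lambda>z. (u z + v z) - (a z + b z)) < e"
        using hnorm_add_le[OF diff_mem[OF uv(1) ab(1)] diff_mem[OF uv(2) ab(2)]] a(2) b(2) by simp
      then show ?thesis using hsubspace_add[OF A a(1) b(1)] by force
    qed
    then show ?thesis unfolding hclosure_def using add_mem[OF uv] by blast
  qed
  moreover have "(\<lambda>z. c * u z) \<in> hclosure H ip A" if u: "u \<in> hclosure H ip A" for u c
  proof -
    have uH: "u \<in> H" using u hclosure_subset by auto
    have "\<exists>b\<in>A. hnorm ip (\<lambda>z. c * u z - b z) < e" if "e > 0" for e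
    proof -
      have pos: "cmod c + 1 > 0" by (simp add: add_nonneg_pos)
      obtain a where a: "a \<in> A" "hnorm ip (\<lambda>z. u z - a z) < e / (cmod c + 1)"
        using hclosure_approx[OF u] \<open>e > 0\<close> pos by (meson divide_pos_pos)
      have aH: "a \<in> H" using a AH by auto
      have "hnorm ip (\<lambda>z. c * u z - c * a z) = cmod c * hnorm ip (\<lambda>z. u z - a z)"
        using hnorm_scale[OF diff_mem[OF uH aH], of c] by (simp add: algebra_simps)
      also have "\<dots> \<le> (cmod c + 1) * hnorm ip (\<lambda>z. u z - a z)"
        using hnorm_nonneg[OF diff_mem[OF uH aH]] by (simp add: mult_right_mono)
      also have "\<dots> < e"
        using a(2) pos by (simp add: field_simps)
      finally show ?thesis using hsubspace_scale[OF A a(1)] by force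
    qed
    then show ?thesis unfolding hclosure_def using scale_mem[OF uH] by blast
  qed
  ultimately show ?thesis
    unfolding hsubspace_def
    using hclosure_subset hclosure_superset[OF AH] hsubspace_zero[OF A] by blast
qed

lemma orthogonal_hclosure:
  assumes w: "w \<in> H" and A: "A \<subseteq> H" and orth: "\<forall>a\<in>A. ip a w = 0"
    and h: "h \<in> hclosure H ip A"
  shows "ip h w = 0"
proof (rule ccontr)
  assume ne: "ip h w \<noteq> 0"
  have hH: "h \<in> H" using h hclosure_subset by auto
  have "w \<noteq> (\<lambda>z. 0)" using ne ip_zero_right[OF hH] by auto
  then have pos: "hnorm ip w > 0"
    using sq_norm_eq_zero_iff[OF w] sq_norm_nonneg[OF w] by (simp add: hnorm_eq_sqrt)
  obtain a where a: "a \<in> A" "hnorm ip (\<lambda>z. h z - a z) < cmod (ip h w) / hnorm ip w"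
    using hclosure_approx[OF h] ne pos by (meson divide_pos_pos zero_less_norm_iff)
  have aH: "a \<in> H" using a A by auto
  have "ip h w = ip (\<lambda>z. h z - a z) w"
    using ip_diff_left[OF hH aH w] orth a(1) by simp
  then have "cmod (ip h w) \<le> hnorm ip (\<lambda>z. h z - a z) * hnorm ip w"
    using cauchy_schwarz[OF diff_mem[OF hH aH] w] by simp
  also have "\<dots> < cmod (ip h w)"
    using a(2) pos by (simp add: pos_less_divide_eq)
  finally show False by simp
qed

section \<open>Orthogonal projection\<close>

lemma hproj_eqI:
  assumes V: "hsubspace V" and g: "g \<in> V"
    and orth: "\<forall>h\<in>V. ip (\<lambda>z. x z - g z) h = 0" and x: "x \<in> H"
  shows "hproj ip V x = g"
  unfolding hproj_def
proof (rule the_equality)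
  show "g \<in> V \<and> (\<forall>h\<in>V. ip (\<lambda>z. x z - g z) h = 0)" using g orth by blast
next
  fix g' assume g': "g' \<in> V \<and> (\<forall>h\<in>V. ip (\<lambda>z. x z - g' z) h = 0)"
  have gH: "g \<in> H" "g' \<in> H" using g g' hsubspace_subset[OF V] by auto
  define e where "e = (\<lambda>z. g' z - g z)"
  have eV: "e \<in> V" and eH: "e \<in> H"
    using hsubspace_diff[OF V] g g' hsubspace_subset[OF V] unfolding e_def by auto
  have "e = (\<lambda>z. (x z - g z) - (x z - g' z))" unfolding e_def by simp
  then have "ip e e = ip (\<lambda>z. x z - g z) e - ip (\<lambda>z. x z - g' z) e"
    using ip_diff_left[OF diff_mem[OF x gH(1)] diff_mem[OF x gH(2)] eH] by simp
  also have "\<dots> = 0" using orth g' eV by simp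
  finally have "e = (\<lambda>z. 0)" using ip_self_eq_zero[OF eH] by blast
  then show "g' = g" unfolding e_def by (simp add: fun_eq_iff)
qed

text \<open>The parallelogram law applied to x - b and x - a, whose half-sum is x minus a point of V.\<close>

lemma sq_norm_diff_le_midpoint:
  assumes V: "hsubspace V" and x: "x \<in> H" and a: "a \<in> V" and b: "b \<in> V"
    and low: "\<forall>v\<in>V. \<delta> \<le> sq_norm (\<lambda>z. x z - v z)"
  shows "sq_norm (\<lambda>z. a z - b z)
    \<le> 2 * sq_norm (\<lambda>z. x z - a z) + 2 * sq_norm (\<lambda>z. x z - b z) - 4 * \<delta>"
proof -
  have ab: "a \<in> H" "b \<in> H" using a b hsubspace_subset[OF V] by auto
  define m where "m = (\<lambda>z. (1/2) * (a z + b z))"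
  have m: "m \<in> V" unfolding m_def by (rule hsubspace_scale[OF V hsubspace_add[OF V a b]])
  have mH: "m \<in> H" using m hsubspace_subset[OF V] by auto
  have minus: "sq_norm (\<lambda>z. a z - b z) = sq_norm (\<lambda>z. x z - b z)
      - 2 * Re (ip (\<lambda>z. x z - b z) (\<lambda>z. x z - a z)) + sq_norm (\<lambda>z. x z - a z)"
    using sq_norm_diff_scale[OF diff_mem[OF x ab(2)] diff_mem[OF x ab(1)], of 1] by simp
  have "(\<lambda>z. 2 * (x z - m z)) = (\<lambda>z. (x z - b z) - (-1) * (x z - a z))"
    unfolding m_def by (rule ext) (simp add: field_simps)
  then have "sq_norm (\<lambda>z. 2 * (x z - m z)) = sq_norm (\<lambda>z. x z - b z)
      + 2 * Re (ip (\<lambda>z. x z - b z) (\<lambda>z. x z - a z)) + sq_norm (\<lambda>z. x z - a z)"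
    using sq_norm_diff_scale[OF diff_mem[OF x ab(2)] diff_mem[OF x ab(1)], of "-1"] by simp
  moreover have "sq_norm (\<lambda>z. 2 * (x z - m z)) = 4 * sq_norm (\<lambda>z. x z - m z)"
    using sq_norm_scale[OF diff_mem[OF x mH], of 2] by simp
  moreover have "\<delta> \<le> sq_norm (\<lambda>z. x z - m z)" using low m by blast
  ultimately show ?thesis using minus by linarith
qed

lemma minimizing_sequence_Cauchy:
  assumes V: "hsubspace V" and x: "x \<in> H"
    and low: "\<forall>v\<in>V. \<delta> \<le> sq_norm (\<lambda>z. x z - v z)"
    and F: "\<And>n. F n \<in> V" "\<And>n. sq_norm (\<lambda>z. x z - F n z) < \<delta> + inverse (real (Suc n))"
  shows "\<forall>e>0. \<exists>K. \<forall>m\<ge>K. \<forall>n\<ge>K. hnorm ip (\<lambda>z. F m z - F n z) < e"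
proof (intro allI impI)
  fix e :: real assume e: "e > 0"
  obtain K where K: "inverse (real (Suc K)) < e\<^sup>2 / 4"
    using reals_Archimedean e by (metis zero_less_divide_iff zero_less_numeral zero_less_power)
  have "hnorm ip (\<lambda>z. F m z - F n z) < e" if "m \<ge> K" "n \<ge> K" for m n
  proof -
    have "inverse (real (Suc m)) \<le> inverse (real (Suc K))"
      and "inverse (real (Suc n)) \<le> inverse (real (Suc K))"
      using that by (simp_all add: le_imp_inverse_le)
    then have "sq_norm (\<lambda>z. F m z - F n z) < e\<^sup>2"
      using sq_norm_diff_le_midpoint[OF V x F(1) F(1) low, of m n] F(2)[of m] F(2)[of n] K
      by linarith
    then have "sqrt (sq_norm (\<lambda>z. F m z - F n z)) < sqrt (e\<^sup>2)"
      by (rule real_sqrt_less_mono)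
    then show ?thesis using e by (simp add: hnorm_eq_sqrt)
  qed
  then show "\<exists>K. \<forall>m\<ge>K. \<forall>n\<ge>K. hnorm ip (\<lambda>z. F m z - F n z) < e" by blast
qed

lemma closest_point_exists:
  assumes V: "hsubspace V" and closed: "hclosure H ip V \<subseteq> V" and x: "x \<in> H"
  shows "\<exists>g\<in>V. \<forall>v\<in>V. sq_norm (\<lambda>z. x z - g z) \<le> sq_norm (\<lambda>z. x z - v z)"
proof -
  have VH: "V \<subseteq> H" using hsubspace_subset[OF V] .
  define D where "D = (\<lambda>v. sq_norm (\<lambda>z. x z - v z)) ` V"
  define \<delta> where "\<delta> = Inf D"
  have D: "D \<noteq> {}" "bdd_below D"
    unfolding D_def bdd_below_def using hsubspace_zero[OF V] sq_norm_nonneg diff_mem x VH by blast+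
  have low: "\<forall>v\<in>V. \<delta> \<le> sq_norm (\<lambda>z. x z - v z)"
    unfolding \<delta>_def using cInf_lower[OF _ D(2)] unfolding D_def by blast
  have "\<exists>v\<in>V. sq_norm (\<lambda>z. x z - v z) < \<delta> + inverse (real (Suc n))" for n
    using cInf_lessD[OF D(1), of "\<delta> + inverse (real (Suc n))"] unfolding \<delta>_def D_def by auto
  then obtain F where F: "\<And>n. F n \<in> V"
    "\<And>n. sq_norm (\<lambda>z. x z - F n z) < \<delta> + inverse (real (Suc n))"
    by metis
  have FH: "F n \<in> H" for n using F(1) VH by auto
  obtain g where g: "g \<in> H" and lim: "(\<lambda>n. hnorm ip (\<lambda>z. F n z - g z)) \<longlonglongrightarrow> 0"
    using complete[OF FH minimizing_sequence_Cauchy[OF V x low F]] by blast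
  have "\<exists>a\<in>V. hnorm ip (\<lambda>z. g z - a z) < e" if "e > 0" for e
  proof -
    obtain N where "\<forall>n\<ge>N. hnorm ip (\<lambda>z. F n z - g z) < e"
      using order_tendstoD(2)[OF lim \<open>e > 0\<close>] unfolding eventually_sequentially by blast
    then have "hnorm ip (\<lambda>z. F N z - g z) < e" by blast
    then have "hnorm ip (\<lambda>z. g z - F N z) < e" using hnorm_diff_commute[OF FH g, of N] by simp
    then show ?thesis using F(1) by blast
  qed
  then have gV: "g \<in> V" using closed g unfolding hclosure_def by blast
  have "(\<lambda>n. sqrt (\<delta> + inverse (real (Suc n))) + hnorm ip (\<lambda>z. F n z - g z))
      \<longlonglongrightarrow> sqrt (\<delta> + 0) + 0"
    by (intro tendsto_add tendsto_real_sqrt tendsto_const LIMSEQ_inverse_real_of_nat lim)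
  moreover have "hnorm ip (\<lambda>z. x z - g z)
      \<le> sqrt (\<delta> + inverse (real (Suc n))) + hnorm ip (\<lambda>z. F n z - g z)" for n
  proof -
    have "hnorm ip (\<lambda>z. x z - F n z) \<le> sqrt (\<delta> + inverse (real (Suc n)))"
      using F(2)[of n] by (simp add: hnorm_eq_sqrt)
    then show ?thesis using hnorm_diff_triangle[OF x FH g, of n] by linarith
  qed
  ultimately have "hnorm ip (\<lambda>z. x z - g z) \<le> sqrt \<delta>"
    using LIMSEQ_le_const[of _ "sqrt (\<delta> + 0) + 0"] by simp
  then have "sq_norm (\<lambda>z. x z - g z) \<le> \<delta>"
    using sq_norm_nonneg[OF diff_mem[OF x g]] by (simp add: hnorm_eq_sqrt)
  then show ?thesis using gV low by force
qed

lemma closest_point_orthogonal: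
  assumes V: "hsubspace V" and x: "x \<in> H" and g: "g \<in> V"
    and min: "\<forall>v\<in>V. sq_norm (\<lambda>z. x z - g z) \<le> sq_norm (\<lambda>z. x z - v z)"
    and h: "h \<in> V"
  shows "ip (\<lambda>z. x z - g z) h = 0"
proof (rule ccontr)
  define w where "w = (\<lambda>z. x z - g z)"
  assume ne: "ip (\<lambda>z. x z - g z) h \<noteq> 0"
  have hH: "h \<in> H" and wH: "w \<in> H"
    using h g hsubspace_subset[OF V] diff_mem[OF x] unfolding w_def by auto
  have "h \<noteq> (\<lambda>z. 0)" using ne ip_zero_right[OF wH] unfolding w_def by auto
  then have pos: "sq_norm h > 0"
    using sq_norm_eq_zero_iff[OF hH] sq_norm_nonneg[OF hH] by simp
  define c where "c = ip w h / sq_norm h"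
  have "(\<lambda>z. g z + c * h z) \<in> V" by (rule hsubspace_add[OF V g hsubspace_scale[OF V h]])
  then have "sq_norm w \<le> sq_norm (\<lambda>z. x z - (g z + c * h z))"
    using bspec[OF min] unfolding w_def by simp
  also have "(\<lambda>z. x z - (g z + c * h z)) = (\<lambda>z. w z - c * h z)"
    unfolding w_def by (simp add: algebra_simps)
  also have "sq_norm \<dots> = sq_norm w - (cmod (ip w h))\<^sup>2 / sq_norm h"
    unfolding c_def using sq_norm_diff_projection[OF wH hH] pos by simp
  finally have "(cmod (ip w h))\<^sup>2 / sq_norm h \<le> 0" by simp
  then show False using ne pos unfolding w_def by (simp add: divide_le_0_iff)
qed

lemma hproj_orthogonal:
  assumes V: "hsubspace V" and closed: "hclosure H ip V \<subseteq> V" and x: "x \<in> H"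
  shows "hproj ip V x \<in> V" and "\<forall>h\<in>V. ip (\<lambda>z. x z - hproj ip V x z) h = 0"
proof -
  obtain g where g: "g \<in> V"
    and min: "\<forall>v\<in>V. sq_norm (\<lambda>z. x z - g z) \<le> sq_norm (\<lambda>z. x z - v z)"
    using closest_point_exists[OF V closed x] by blast
  have orth: "\<forall>h\<in>V. ip (\<lambda>z. x z - g z) h = 0"
    using closest_point_orthogonal[OF V x g min] by blast
  show "hproj ip V x \<in> V" and "\<forall>h\<in>V. ip (\<lambda>z. x z - hproj ip V x z) h = 0"
    using hproj_eqI[OF V g orth x] g orth by simp_all
qed

section \<open>Cyclic subspaces and orders of zeros\<close>

definition poly_multiples :: "cfun \<Rightarrow> cfun set" where
  "poly_multiples g = {(\<lambda>z. poly p z * g z) | p. True}"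

lemma cyc_eq_hclosure: "cyc H ip g = hclosure H ip (poly_multiples g)"
  unfolding cyc_def poly_multiples_def ..

lemma poly_mult_mem:
  assumes g: "g \<in> H"
  shows "(\<lambda>z. poly p z * g z) \<in> H"
proof (induction p rule: pCons_induct)
  case 0
  then show ?case using zero_mem by simp
next
  case (pCons a p)
  have "(\<lambda>z. poly (pCons a p) z * g z) = (\<lambda>z. a * g z + shift (\<lambda>z. poly p z * g z) z)"
    by (simp add: shift_def algebra_simps)
  then show ?case using add_mem[OF scale_mem[OF g] shift_mem[OF pCons.IH]] by simp
qed

lemma hsubspace_poly_multiples:
  assumes g: "g \<in> H"
  shows "hsubspace (poly_multiples g)"
  unfolding hsubspace_def
proof (intro conjI ballI allI)
  show "poly_multiples g \<subseteq> H"
    unfolding poly_multiples_def using poly_mult_mem[OF g] by auto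
  show "(\<lambda>z. 0) \<in> poly_multiples g"
    unfolding poly_multiples_def by (rule CollectI, rule exI[of _ 0]) simp
next
  fix u v assume "u \<in> poly_multiples g" "v \<in> poly_multiples g"
  then obtain p q where "u = (\<lambda>z. poly p z * g z)" "v = (\<lambda>z. poly q z * g z)"
    unfolding poly_multiples_def by auto
  then have "(\<lambda>z. u z + v z) = (\<lambda>z. poly (p + q) z * g z)"
    by (simp add: algebra_simps)
  then show "(\<lambda>z. u z + v z) \<in> poly_multiples g" unfolding poly_multiples_def by blast
next
  fix u c assume "u \<in> poly_multiples g"
  then obtain p where "u = (\<lambda>z. poly p z * g z)" unfolding poly_multiples_def by auto
  then have "(\<lambda>z. c * u z) = (\<lambda>z. poly (smult c p) z * g z)" by (simp add: mult.assoc)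
  then show "(\<lambda>z. c * u z) \<in> poly_multiples g" unfolding poly_multiples_def by blast
qed

lemma hsubspace_cyc: "g \<in> H \<Longrightarrow> hsubspace (cyc H ip g)"
  unfolding cyc_eq_hclosure by (rule hsubspace_hclosure[OF hsubspace_poly_multiples])

lemma hclosure_cyc: "g \<in> H \<Longrightarrow> hclosure H ip (cyc H ip g) = cyc H ip g"
  unfolding cyc_eq_hclosure
  by (rule hclosure_hclosure[OF hsubspace_subset[OF hsubspace_poly_multiples]])

lemma mem_cyc_self:
  assumes g: "g \<in> H"
  shows "g \<in> cyc H ip g"
proof -
  have "g \<in> poly_multiples g"
    unfolding poly_multiples_def by (rule CollectI, rule exI[of _ 1]) simp
  then show ?thesis
    unfolding cyc_eq_hclosure
    using hclosure_superset[OF hsubspace_subset[OF hsubspace_poly_multiples[OF g]]] by blast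
qed

lemma cyc_shift_subset: "cyc H ip (shift f) \<subseteq> cyc H ip f"
proof -
  have "poly_multiples (shift f) \<subseteq> poly_multiples f"
  proof
    fix u assume "u \<in> poly_multiples (shift f)"
    then obtain p where "u = (\<lambda>z. poly p z * shift f z)" unfolding poly_multiples_def by auto
    then have "u = (\<lambda>z. poly (p * [:0, 1:]) z * f z)" by (simp add: shift_def algebra_simps)
    then show "u \<in> poly_multiples f" unfolding poly_multiples_def by blast
  qed
  then show ?thesis unfolding cyc_eq_hclosure by (rule hclosure_mono)
qed

lemma zorder_higher_deriv:
  assumes f: "f \<in> H" "f \<noteq> (\<lambda>z. 0)"
  shows "\<forall>k<nat (zorder f 0). (deriv ^^ k) f 0 = 0" and "(deriv ^^ nat (zorder f 0)) f 0 \<noteq> 0"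
proof -
  have ex: "\<exists>k. (deriv ^^ k) f 0 \<noteq> 0"
  proof (rule ccontr)
    assume "\<not> (\<exists>k. (deriv ^^ k) f 0 \<noteq> 0)"
    then have "\<forall>w\<in>Om. f w = 0"
      using holomorphic_fun_eq_0_on_connected[OF holomorphic[OF f(1)] domain(1,2) _ domain(3)]
      by auto
    then have "f = (\<lambda>z. 0)" using vanishes_outside[OF f(1)] by (metis ext)
    with f(2) show False by contradiction
  qed
  define m where "m = (LEAST k. (deriv ^^ k) f 0 \<noteq> 0)"
  have m: "(deriv ^^ m) f 0 \<noteq> 0" "\<And>k. k < m \<Longrightarrow> (deriv ^^ k) f 0 = 0"
    unfolding m_def using LeastI_ex[OF ex] not_less_Least by auto
  have "zorder f 0 = int m"
    by (rule zorder_zero_eqI[OF holomorphic[OF f(1)] domain(1) domain(3)]) (use m in auto)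
  then show "\<forall>k<nat (zorder f 0). (deriv ^^ k) f 0 = 0" and "(deriv ^^ nat (zorder f 0)) f 0 \<noteq> 0"
    using m by simp_all
qed

text \<open>Leibniz rule: every term pairs a derivative of order below d of f with a derivative of
  z p(z), and the latter vanishes at 0 in order 0.\<close>

lemma higher_deriv_poly_mult_shift_zero:
  assumes f: "f \<in> H" and below: "\<forall>k<d. (deriv ^^ k) f 0 = 0"
  shows "(deriv ^^ d) (\<lambda>z. poly p z * shift f z) 0 = 0"
proof -
  have "(\<lambda>z. poly p z * shift f z) = (\<lambda>z. (poly p z * z) * f z)"
    by (simp add: shift_def algebra_simps)
  moreover have "(\<lambda>z. poly p z * z) holomorphic_on Om"
    by (intro holomorphic_intros)
  ultimately have "(deriv ^^ d) (\<lambda>z. poly p z * shift f z) 0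
     = (\<Sum>i = 0..d. of_nat (d choose i) * (deriv ^^ i) (\<lambda>z. poly p z * z) 0 * (deriv ^^ (d - i)) f 0)"
    using higher_deriv_mult[OF _ holomorphic[OF f] domain(1) domain(3)] by simp
  also have "\<dots> = 0"
  proof (rule sum.neutral, intro ballI)
    fix i assume "i \<in> {0..d}"
    then have "i = 0 \<or> d - i < d" by auto
    then show "of_nat (d choose i) * (deriv ^^ i) (\<lambda>z. poly p z * z) 0 * (deriv ^^ (d - i)) f 0 = 0"
      using below by auto
  qed
  finally show ?thesis .
qed

section \<open>Projecting the derivative kernel onto [f]\<close>

lemma kernel_orthogonal_cyc_shift:
  assumes f: "f \<in> H" and below: "\<forall>k<d. (deriv ^^ k) f 0 = 0"
    and k: "k \<in> H" and kd: "\<forall>g\<in>H. ip g k = (deriv ^^ d) g 0"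
  shows "\<forall>h\<in>cyc H ip (shift f). ip h k = 0"
proof -
  have PM: "poly_multiples (shift f) \<subseteq> H"
    using hsubspace_subset[OF hsubspace_poly_multiples[OF shift_mem[OF f]]] .
  have "\<forall>u\<in>poly_multiples (shift f). ip u k = 0"
    using kd poly_mult_mem[OF shift_mem[OF f]] higher_deriv_poly_mult_shift_zero[OF f below]
    unfolding poly_multiples_def by auto
  then show ?thesis
    unfolding cyc_eq_hclosure using orthogonal_hclosure[OF k PM] by blast
qed

lemma orthogonal_cyc:
  assumes f: "f \<in> H" and P: "P \<in> cyc H ip (shift f)" and w: "w \<in> H"
    and J: "ip (\<lambda>z. f z - P z) w = 0" and S: "\<forall>h\<in>cyc H ip (shift f). ip h w = 0"
  shows "\<forall>h\<in>cyc H ip f. ip h w = 0"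
proof -
  have VS: "hsubspace (cyc H ip (shift f))" using hsubspace_cyc[OF shift_mem[OF f]] .
  have PM: "poly_multiples f \<subseteq> H"
    using hsubspace_subset[OF hsubspace_poly_multiples[OF f]] .
  have "ip a w = 0" if aP: "a \<in> poly_multiples f" for a
  proof -
    obtain p where p: "a = (\<lambda>z. poly p z * f z)"
      using aP unfolding poly_multiples_def by blast
    obtain p0 q where pq: "p = pCons p0 q" by (cases p)
    define u where "u = (\<lambda>z. p0 * P z + poly q z * shift f z)"
    have "(\<lambda>z. poly q z * shift f z) \<in> poly_multiples (shift f)"
      unfolding poly_multiples_def by blast
    then have "(\<lambda>z. poly q z * shift f z) \<in> cyc H ip (shift f)"
      using hclosure_superset[OF hsubspace_subset[OF hsubspace_poly_multiples[OF shift_mem[OF f]]]]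
      unfolding cyc_eq_hclosure by blast
    then have u: "u \<in> cyc H ip (shift f)"
      unfolding u_def by (rule hsubspace_add[OF VS hsubspace_scale[OF VS P]])
    have uH: "u \<in> H" and JH: "(\<lambda>z. f z - P z) \<in> H"
      using u P hsubspace_subset[OF VS] diff_mem[OF f] by auto
    have "a = (\<lambda>z. p0 * (f z - P z) + u z)"
      unfolding p pq u_def by (simp add: shift_def algebra_simps)
    then have "ip a w = p0 * ip (\<lambda>z. f z - P z) w + ip u w"
      using ip_add_left[OF scale_mem[OF JH] uH w] ip_scale_left[OF JH w] by simp
    then show ?thesis using J S u by simp
  qed
  then show ?thesis
    unfolding cyc_eq_hclosure using orthogonal_hclosure[OF w PM] by blast
qed

lemma hproj_cyc_eq_line_projection:
  assumes f: "f \<in> H" and k: "k \<in> H" and kS: "\<forall>h\<in>cyc H ip (shift f). ip h k = 0"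
  defines "J \<equiv> \<lambda>z. f z - hproj ip (cyc H ip (shift f)) f z"
  assumes J0: "J \<noteq> (\<lambda>z. 0)"
  shows "hproj ip (cyc H ip f) k = (\<lambda>z. (cnj (ip J k) / sq_norm J) * J z)"
proof -
  define VS where "VS = cyc H ip (shift f)"
  have VS: "hsubspace VS" and VF: "hsubspace (cyc H ip f)"
    unfolding VS_def using hsubspace_cyc shift_mem f by auto
  have P: "hproj ip VS f \<in> VS" and JS: "\<forall>h\<in>VS. ip J h = 0"
    using hproj_orthogonal[OF VS _ f] hclosure_cyc[OF shift_mem[OF f]]
    unfolding J_def VS_def by auto
  have PH: "hproj ip VS f \<in> H" using P hsubspace_subset[OF VS] by auto
  have JH: "J \<in> H" unfolding J_def VS_def[symmetric] using diff_mem[OF f PH] .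
  have JF: "J \<in> cyc H ip f"
    unfolding J_def VS_def[symmetric]
    using hsubspace_diff[OF VF mem_cyc_self[OF f]] P cyc_shift_subset unfolding VS_def by blast
  have pos: "sq_norm J \<noteq> 0" using sq_norm_eq_zero_iff[OF JH] J0 by simp
  define c where "c = cnj (ip J k) / sq_norm J"
  define w where "w = (\<lambda>z. k z - c * J z)"
  have wH: "w \<in> H" unfolding w_def using diff_mem[OF k scale_mem[OF JH]] .
  have ip_w: "ip h w = ip h k - cnj c * ip h J" if "h \<in> H" for h
    unfolding w_def using ip_diff_right[OF k scale_mem[OF JH] that] ip_scale_right[OF JH that] by simp
  have "ip J w = 0"
    using ip_w[OF JH] ip_self_eq_sq_norm[OF JH] pos unfolding c_def by simp
  moreover have "ip h w = 0" if h: "h \<in> VS" for h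
  proof -
    have hH: "h \<in> H" using h hsubspace_subset[OF VS] by auto
    have "ip h J = 0" using ip_commute[OF JH hH] JS h by simp
    then show ?thesis using ip_w[OF hH] kS h unfolding VS_def by simp
  qed
  ultimately have "\<forall>h\<in>cyc H ip f. ip h w = 0"
    using orthogonal_cyc[OF f P[unfolded VS_def] wH] unfolding J_def VS_def by blast
  then have "\<forall>h\<in>cyc H ip f. ip w h = 0"
    using ip_commute[OF _ wH] hsubspace_subset[OF VF] by (metis complex_cnj_zero subsetD)
  then have "hproj ip (cyc H ip f) k = (\<lambda>z. c * J z)"
    using hproj_eqI[OF VF hsubspace_scale[OF VF JF] _ k] unfolding w_def by blast
  then show ?thesis unfolding c_def .
qed

lemma hproj_cyc_mem:
  assumes "g \<in> H" "x \<in> H"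
  shows "hproj ip (cyc H ip g) x \<in> cyc H ip g" and "hproj ip (cyc H ip g) x \<in> H"
proof -
  show in_cyc: "hproj ip (cyc H ip g) x \<in> cyc H ip g"
    using hproj_orthogonal(1)[OF hsubspace_cyc[OF assms(1)] _ assms(2)] hclosure_cyc[OF assms(1)]
    by blast
  show "hproj ip (cyc H ip g) x \<in> H"
    using in_cyc hsubspace_subset[OF hsubspace_cyc[OF assms(1)]] by blast
qed

lemma higher_deriv_cyc_shift_complement:
  assumes f: "f \<in> H" and below: "\<forall>k<d. (deriv ^^ k) f 0 = 0"
    and k: "k \<in> H" and kd: "\<forall>g\<in>H. ip g k = (deriv ^^ d) g 0"
  shows "(deriv ^^ d) (\<lambda>z. f z - hproj ip (cyc H ip (shift f)) f z) 0 = (deriv ^^ d) f 0"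
proof -
  define P where "P = hproj ip (cyc H ip (shift f)) f"
  have P: "P \<in> cyc H ip (shift f)" and PH: "P \<in> H"
    unfolding P_def using hproj_cyc_mem[OF shift_mem[OF f] f] by blast+
  have "(deriv ^^ d) (\<lambda>z. f z - P z) 0 = ip f k - ip P k"
    using kd diff_mem[OF f PH] ip_diff_left[OF f PH k] by simp
  also have "ip P k = 0"
    using kernel_orthogonal_cyc_shift[OF f below k kd] P by blast
  finally show ?thesis using kd f unfolding P_def by simp
qed

end

theorem mainTheorem2:
  fixes \<Omega> :: "complex set" and H :: "cfun set" and ip :: "cfun \<Rightarrow> cfun \<Rightarrow> complex"
    and f k0d :: cfun and d :: nat
  assumes "analytic_hilbert_space \<Omega> H ip"
    and "f \<in> H" and "f \<noteq> (\<lambda>z. 0)"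
    and "d = nat (zorder f 0)"
    and "k0d \<in> H" and "\<forall>g\<in>H. ip g k0d = (deriv ^^ d) g 0"
  shows "let J = (\<lambda>z. f z - hproj ip (cyc H ip (shift f)) f z);
             v = hproj ip (cyc H ip f) k0d
         in v = (\<lambda>z. ((deriv ^^ d) v 0 / (deriv ^^ d) f 0) * J z)"
proof -
  interpret analytic_hilbert \<Omega> H ip using assms(1) by unfold_locales
  define J where "J = (\<lambda>z. f z - hproj ip (cyc H ip (shift f)) f z)"
  define c where "c = cnj (ip J k0d) / sq_norm J"
  have below: "\<forall>k<d. (deriv ^^ k) f 0 = 0" and fd: "(deriv ^^ d) f 0 \<noteq> 0"
    using zorder_higher_deriv[OF assms(2,3)] assms(4) by simp_all
  have JH: "J \<in> H"
    unfolding J_def using diff_mem[OF assms(2) hproj_cyc_mem(2)[OF shift_mem assms(2)]] assms(2) .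
  have Jd: "(deriv ^^ d) J 0 = (deriv ^^ d) f 0"
    unfolding J_def using higher_deriv_cyc_shift_complement[OF assms(2) below assms(5,6)] .
  then have "J \<noteq> (\<lambda>z. 0)" using fd by auto
  moreover have "\<forall>h\<in>cyc H ip (shift f). ip h k0d = 0"
    using kernel_orthogonal_cyc_shift[OF assms(2) below assms(5,6)] .
  ultimately have v: "hproj ip (cyc H ip f) k0d = (\<lambda>z. c * J z)"
    using hproj_cyc_eq_line_projection[OF assms(2,5)] unfolding J_def c_def by blast
  have "(deriv ^^ d) (\<lambda>z. c * J z) 0 = c * (deriv ^^ d) f 0"
    using higher_deriv_cmult[OF holomorphic[OF JH] domain(3,1)] Jd by simp
  then show ?thesis
    unfolding Let_def J_def[symmetric] v using fd by simp
qed

end
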